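(* Let $q>1$ and $\hbar,m>0$. For $N\ge0$ let $$H_N^{(s)}(x,it;q)=\sum_{k=0}^{\lfloor N/2\rfloor}\frac{\big(\frac{i\hbar t}{2m}\big)^k[N]_q!\,x^{N-2k}}{[N-2k]_q!\,k!}.$$ Then for real $x,t,p$, $$e^{-\frac{i}{\hbar}\frac{p^2}{2m}t}\,e_q\Big(\frac{i}{\hbar}px\Big)=\sum_{N=0}^\infty\Big(\frac{i}{\hbar}\Big)^N\frac{p^N}{[N]_q!}H_N^{(s)}(x,it;q),$$ and each $\psi(x,t)=H_N^{(s)}(x,it;q)$ solves the $q$-Schrödinger equation $\big(\partial_t-\frac{i\hbar}{2m}D_x^2\big)\psi(x,t)=0$ for $x\ne0$.
   Context: For $n\ge 0$ let $[n]_q=\frac{q^n-1}{q-1}$, $[0]_q!=1$, $[n]_q!=[1]_q\cdots[n]_q$, and $e_q(z)=\sum_{n\ge0}z^n/[n]_q!$ (entire for $q>1$). $D_x$ is the $q$-derivative in $x$ at fixed $t$: $D_xf(x,t)=\frac{f(qx,t)-f(x,t)}{(q-1)x}$, $D_x^2=D_x\circ D_x$. *)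

theory Defs
  imports Complex_Main
begin

definition qnum :: "real \<Rightarrow> nat \<Rightarrow> real" where
  "qnum q n = (q ^ n - 1) / (q - 1)"

definition qfact :: "real \<Rightarrow> nat \<Rightarrow> real" where
  "qfact q n = (\<Prod>j=1..n. qnum q j)"

definition qexp :: "real \<Rightarrow> complex \<Rightarrow> complex" where
  "qexp q z = (\<Sum>n. z ^ n / complex_of_real (qfact q n))"

definition Dq :: "real \<Rightarrow> (real \<Rightarrow> real \<Rightarrow> complex) \<Rightarrow> real \<Rightarrow> real \<Rightarrow> complex" where
  "Dq q f x t = (f (q * x) t - f x t) / complex_of_real ((q - 1) * x)"

text \<open>Hs q hbar m N x t stands for H_N^(s)(x, it; q)\<close>
definition Hs :: "real \<Rightarrow> real \<Rightarrow> real \<Rightarrow> nat \<Rightarrow> real \<Rightarrow> real \<Rightarrow> complex" where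
  "Hs q hbar m N x t = (\<Sum>k=0..N div 2.
      (\<i> * complex_of_real (hbar * t / (2 * m))) ^ k * complex_of_real (qfact q N) * complex_of_real (x ^ (N - 2 * k))
      / complex_of_real (qfact q (N - 2 * k) * fact k))"

end

theory Submission
  imports Defs
begin

text \<open>
  The generating function is
  the Cauchy product of exp(A u^2) = \<Sum>_k A^k u^(2k) / k! with e_q(u x), where u = i p / hbar
  and A = i hbar t / (2 m); since [n]_q! \<ge> n! for q > 1, both series converge absolutely.
  For the Schroedinger equation, D_x acts on monomials by D_x x^n = [n]_q x^(n-1), and the
  coefficients r_k = [N]_q! / ([N-2k]_q! k!) satisfy (k+1) r_(k+1) = [N-2k]_q [N-2k-1]_q r_k,
  which matches the time derivative of the t^(k+1)-term with D_x^2 of the t^k-term.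
\<close>

lemma qnum_0 [simp]: "qnum q 0 = 0"
  by (simp add: qnum_def)

lemma qnum_eq_sum_powers: "q \<noteq> 1 \<Longrightarrow> qnum q n = (\<Sum>i<n. q ^ i)"
  by (simp add: qnum_def geometric_sum)

lemma of_nat_le_qnum:
  assumes "q > 1"
  shows "real n \<le> qnum q n"
proof -
  have "real n = (\<Sum>i<n. 1::real)" by simp
  also have "\<dots> \<le> (\<Sum>i<n. q ^ i)"
    by (rule sum_mono) (use assms in \<open>simp add: one_le_power\<close>)
  finally show ?thesis using qnum_eq_sum_powers[of q n] assms by simp
qed

lemma qfact_0 [simp]: "qfact q 0 = 1"
  by (simp add: qfact_def)

lemma qfact_Suc: "qfact q (Suc n) = qnum q (Suc n) * qfact q n"
  by (simp add: qfact_def prod.nat_ivl_Suc')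

lemma fact_le_qfact:
  assumes "q > 1"
  shows "fact n \<le> qfact q n"
proof (induction n)
  case 0
  then show ?case by simp
next
  case (Suc n)
  have "fact (Suc n) = real (Suc n) * fact n" by simp
  also have "\<dots> \<le> qnum q (Suc n) * qfact q n"
    by (rule mult_mono) (use Suc of_nat_le_qnum[OF assms, of "Suc n"] in auto)
  finally show ?case by (simp add: qfact_Suc)
qed

lemma qfact_pos: "q > 1 \<Longrightarrow> qfact q n > 0"
  using fact_le_qfact[of q n] by (meson fact_gt_zero less_le_trans)

lemma q_difference_quotient_power:
  assumes "x \<noteq> 0" and "q \<noteq> 1"
  shows "((q * x) ^ n - x ^ n) / ((q - 1) * x) = qnum q n * x ^ (n - 1)"
  using assms by (cases n) (simp_all add: qnum_def field_simps power_mult_distrib)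

lemma Dq_sum_powers:
  fixes c :: "nat \<Rightarrow> complex" and e :: "nat \<Rightarrow> nat"
  assumes x: "x \<noteq> 0" and q: "q \<noteq> 1"
    and f_x: "f x t = (\<Sum>k\<in>K. c k * of_real (x ^ e k))"
    and f_qx: "f (q * x) t = (\<Sum>k\<in>K. c k * of_real ((q * x) ^ e k))"
  shows "Dq q f x t = (\<Sum>k\<in>K. c k * of_real (qnum q (e k) * x ^ (e k - 1)))"
proof -
  have "Dq q f x t = (\<Sum>k\<in>K. c k * of_real ((q * x) ^ e k) - c k * of_real (x ^ e k)) / of_real ((q - 1) * x)"
    unfolding Dq_def f_x f_qx by (simp add: sum_subtractf)
  also have "\<dots> = (\<Sum>k\<in>K. c k * of_real (((q * x) ^ e k - x ^ e k) / ((q - 1) * x)))"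
    unfolding sum_divide_distrib by (simp add: algebra_simps)
  finally show ?thesis
    by (simp add: q_difference_quotient_power[OF x q])
qed

definition hermite_coeff :: "real \<Rightarrow> nat \<Rightarrow> nat \<Rightarrow> real" where
  "hermite_coeff q N k = qfact q N / (qfact q (N - 2 * k) * fact k)"

lemma Hs_eq_sum_hermite_coeff:
  "Hs q hbar m N x t = (\<Sum>k\<in>{0..N div 2}.
     ((\<i> * complex_of_real (hbar / (2 * m)) * of_real t) ^ k * of_real (hermite_coeff q N k))
       * of_real (x ^ (N - 2 * k)))"
  unfolding Hs_def hermite_coeff_def
  by (rule sum.cong[OF refl]) (simp add: field_simps)

lemma hermite_coeff_Suc:
  assumes q: "q > 1" and k: "2 * k + 2 \<le> N"
  shows "real (Suc k) * hermite_coeff q N (Suc k)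
       = hermite_coeff q N k * qnum q (N - 2 * k) * qnum q (N - 2 * k - 1)"
proof -
  define n where "n = N - 2 * k - 2"
  have n: "N - 2 * k = Suc (Suc n)" "N - 2 * Suc k = n" "N - 2 * k - 1 = Suc n"
    using k unfolding n_def by arith+
  have "qfact q n > 0" "qnum q (Suc n) > 0" "qnum q (Suc (Suc n)) > 0"
    using qfact_pos[OF q] of_nat_le_qnum[OF q, of "Suc n"] of_nat_le_qnum[OF q, of "Suc (Suc n)"]
    by auto
  then show ?thesis
    unfolding hermite_coeff_def n
    by (simp add: qfact_Suc field_simps del: of_nat_Suc fact_Suc) (simp add: fact_Suc del: of_nat_Suc)
qed

text \<open>
  Differentiating \<Sum>_k A^k r_k x^(N-2k) in A and shifting k to k+1 gives D_x^2 of the same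
  sum; the extra top term on the right vanishes because [0]_q = 0.
\<close>
lemma hermite_coeff_derivative_shift:
  fixes A :: complex
  assumes q: "q > 1"
  shows "(\<Sum>k\<in>{0..N div 2}. of_nat k * A ^ (k - 1) * of_real (hermite_coeff q N k * x ^ (N - 2 * k)))
       = (\<Sum>k\<in>{0..N div 2}. (A ^ k * of_real (hermite_coeff q N k) * of_real (qnum q (N - 2 * k)))
            * of_real (qnum q (N - 2 * k - 1) * x ^ (N - 2 * k - 1 - 1)))"
    (is "(\<Sum>k\<in>_. ?g k) = (\<Sum>k\<in>_. ?h k)")
proof (cases "N div 2")
  case 0
  then have "N = 0 \<or> N = 1" by arith
  then show ?thesis using 0 by auto
next
  case (Suc M)
  have shift: "?g (Suc k) = ?h k" if "k \<le> M" for k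
  proof -
    have k: "2 * k + 2 \<le> N" using that Suc by arith
    have "?g (Suc k) = A ^ k * of_real (real (Suc k) * hermite_coeff q N (Suc k)) * of_real (x ^ (N - 2 * Suc k))"
      by (simp only: of_real_mult of_real_of_nat_eq) (simp add: ac_simps del: of_nat_Suc)
    also have "N - 2 * Suc k = N - 2 * k - 1 - 1" by arith
    finally show ?thesis
      unfolding hermite_coeff_Suc[OF q k] by (simp add: ac_simps)
  qed
  have "N - 2 * Suc M = 0 \<or> N - 2 * Suc M - 1 = 0"
    using Suc by arith
  then have "?h (Suc M) = 0"
    by auto
  then have "(\<Sum>k\<le>Suc M. ?h k) = (\<Sum>k\<le>M. ?h k)"
    by simp
  also have "\<dots> = (\<Sum>k\<le>M. ?g (Suc k))"
    by (rule sum.cong[OF refl], rule shift[symmetric]) simp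
  also have "\<dots> = (\<Sum>k\<le>Suc M. ?g k)"
    by (subst sum.atMost_Suc_shift) simp
  finally show ?thesis
    unfolding Suc atLeast0AtMost by simp
qed

lemma Dq_Dq_Hs:
  fixes hbar m :: real
  assumes q: "q > 1" and x: "x \<noteq> 0"
  defines "B \<equiv> \<i> * complex_of_real (hbar / (2 * m))"
  shows "Dq q (Dq q (Hs q hbar m N)) x t
       = (\<Sum>k\<in>{0..N div 2}. ((B * of_real t) ^ k * of_real (hermite_coeff q N k) * of_real (qnum q (N - 2 * k)))
            * of_real (qnum q (N - 2 * k - 1) * x ^ (N - 2 * k - 1 - 1)))"
proof -
  have q1: "q \<noteq> 1" using q by simp
  have Dq_Hs: "Dq q (Hs q hbar m N) y t
      = (\<Sum>k\<in>{0..N div 2}. ((B * of_real t) ^ k * of_real (hermite_coeff q N k) * of_real (qnum q (N - 2 * k)))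
           * of_real (y ^ (N - 2 * k - 1)))"
    if y: "y \<noteq> 0" for y
    using Dq_sum_powers[OF y q1, where K = "{0..N div 2}" and e = "\<lambda>k. N - 2 * k"
        and c = "\<lambda>k. (B * of_real t) ^ k * of_real (hermite_coeff q N k)"]
    by (simp add: Hs_eq_sum_hermite_coeff B_def mult.assoc)
  show ?thesis
    by (rule Dq_sum_powers[OF x q1]) (use Dq_Hs[of x] Dq_Hs[of "q * x"] x q in simp_all)
qed

lemma Hs_has_vector_derivative:
  fixes hbar m :: real
  defines "B \<equiv> \<i> * complex_of_real (hbar / (2 * m))"
  shows "((\<lambda>s. Hs q hbar m N x s) has_vector_derivative
           B * (\<Sum>k\<in>{0..N div 2}. of_nat k * (B * of_real t) ^ (k - 1)
                   * of_real (hermite_coeff q N k * x ^ (N - 2 * k)))) (at t)"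
proof -
  define E where "E k = complex_of_real (hermite_coeff q N k * x ^ (N - 2 * k))" for k
  define F where "F z = (\<Sum>k\<in>{0..N div 2}. (B * z) ^ k * E k)" for z
  have Hs_F: "(\<lambda>s. Hs q hbar m N x s) = (\<lambda>s. F (of_real s))"
    by (rule ext) (simp add: F_def Hs_eq_sum_hermite_coeff E_def B_def ac_simps)
  have "(F has_field_derivative (\<Sum>k\<in>{0..N div 2}. of_nat k * (B * of_real t) ^ (k - 1) * B * E k))
      (at (of_real t))"
    unfolding F_def by (rule DERIV_sum) (auto intro!: derivative_eq_intros simp: ac_simps)
  then show ?thesis
    unfolding Hs_F E_def
    by (rule has_vector_derivative_real_field[THEN has_vector_derivative_eq_rhs])
       (simp add: sum_distrib_left ac_simps)
qed

lemma Hs_solves_q_Schroedinger: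
  assumes "q > 1" and "x \<noteq> 0"
  shows "((\<lambda>s. Hs q hbar m N x s) has_vector_derivative
           (\<i> * complex_of_real (hbar / (2 * m))) * Dq q (Dq q (Hs q hbar m N)) x t) (at t)"
  using Hs_has_vector_derivative[of q hbar m N x t]
  unfolding Dq_Dq_Hs[OF assms] hermite_coeff_derivative_shift[OF assms(1)] .

lemma summable_norm_qexp_series:
  assumes q: "q > 1"
  shows "summable (\<lambda>n. norm (y ^ n / complex_of_real (qfact q n)))"
proof (rule summable_comparison_test)
  show "summable (\<lambda>n. inverse (fact n) * norm y ^ n)"
    by (rule summable_exp)
  show "\<exists>N. \<forall>n\<ge>N. norm (norm (y ^ n / complex_of_real (qfact q n))) \<le> inverse (fact n) * norm y ^ n"
  proof (intro exI allI impI)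
    fix n :: nat
    have pos: "qfact q n > 0" using qfact_pos[OF q] .
    have "norm (norm (y ^ n / complex_of_real (qfact q n))) = norm y ^ n / qfact q n"
      using pos by (simp add: norm_divide norm_power)
    also have "\<dots> \<le> norm y ^ n / fact n"
      by (rule divide_left_mono) (use fact_le_qfact[OF q, of n] pos in auto)
    finally show "norm (norm (y ^ n / complex_of_real (qfact q n))) \<le> inverse (fact n) * norm y ^ n"
      by (simp add: divide_inverse mult.commute)
  qed
qed

lemma
  fixes e :: "nat \<Rightarrow> 'a::real_normed_vector"
  defines "a \<equiv> \<lambda>n. if even n then e (n div 2) else 0"
  shows sums_even_spread: "e sums s \<Longrightarrow> a sums s"
    and summable_norm_even_spread: "summable (\<lambda>n. norm (e n)) \<Longrightarrow> summable (\<lambda>n. norm (a n))"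
proof -
  have double: "strict_mono (\<lambda>k::nat. 2 * k)"
    by (rule strict_monoI) simp
  have odd: "n \<notin> range (\<lambda>k::nat. 2 * k) \<Longrightarrow> odd n" for n
    by (auto elim: evenE)
  show "e sums s \<Longrightarrow> a sums s"
    using sums_mono_reindex[OF double, of a s] odd by (auto simp: a_def)
  show "summable (\<lambda>n. norm (e n)) \<Longrightarrow> summable (\<lambda>n. norm (a n))"
    using summable_mono_reindex[OF double, of "\<lambda>n. norm (a n)"] odd by (auto simp: a_def)
qed

lemma Cauchy_product_even_spread:
  fixes e b :: "nat \<Rightarrow> 'a::semiring_0"
  shows "(\<Sum>i\<le>N. (if even i then e (i div 2) else 0) * b (N - i)) = (\<Sum>k\<le>N div 2. e k * b (N - 2 * k))"
proof -
  have "(\<Sum>i\<le>N. (if even i then e (i div 2) else 0) * b (N - i))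
      = (\<Sum>i\<in>{i\<in>{..N}. even i}. e (i div 2) * b (N - i))"
    by (subst sum.inter_filter) (auto intro: sum.cong)
  also have "{i\<in>{..N}. even i} = (\<lambda>k. 2 * k) ` {..N div 2}"
    by (auto elim!: evenE)
  also have "(\<Sum>i\<in>(\<lambda>k. 2 * k) ` {..N div 2}. e (i div 2) * b (N - i)) = (\<Sum>k\<le>N div 2. e k * b (N - 2 * k))"
    by (subst sum.reindex) (auto simp: inj_on_def)
  finally show ?thesis .
qed

lemma Hs_generating_coefficient:
  fixes u :: complex and q hbar m x t :: real
  assumes q: "q > 1"
  defines "A \<equiv> \<i> * complex_of_real (hbar * t / (2 * m))"
  shows "(\<Sum>k\<le>N div 2. (A * u\<^sup>2) ^ k /\<^sub>R fact k * ((u * of_real x) ^ (N - 2 * k) / of_real (qfact q (N - 2 * k))))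
       = u ^ N / of_real (qfact q N) * Hs q hbar m N x t"
proof -
  have "(A * u\<^sup>2) ^ k /\<^sub>R fact k * ((u * of_real x) ^ (N - 2 * k) / of_real (qfact q (N - 2 * k)))
      = u ^ N / of_real (qfact q N) * (A ^ k * of_real (qfact q N) * of_real (x ^ (N - 2 * k))
          / of_real (qfact q (N - 2 * k) * fact k))"
    if "k \<le> N div 2" for k
  proof -
    obtain j where N: "N = 2 * k + j"
      using \<open>k \<le> N div 2\<close> le_Suc_ex by fastforce
    have "qfact q j \<noteq> 0" "qfact q N \<noteq> 0"
      using qfact_pos[OF q, of j] qfact_pos[OF q, of N] by auto
    moreover have "u ^ N = (u\<^sup>2) ^ k * u ^ j"
      unfolding N by (simp add: power_add power_mult)
    ultimately show ?thesis
      by (simp add: N scaleR_conv_of_real power_mult_distrib field_simps)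
  qed
  then show ?thesis
    unfolding Hs_def atLeast0AtMost sum_distrib_left A_def by (intro sum.cong) auto
qed

lemma Hs_generating_function:
  fixes q hbar m x t p :: real
  assumes q: "q > 1" and hbar: "hbar \<noteq> 0"
  defines "z \<equiv> \<i> / complex_of_real hbar"
  shows "(\<lambda>N. z ^ N * complex_of_real (p ^ N / qfact q N) * Hs q hbar m N x t)
           sums (exp (- z * complex_of_real (p\<^sup>2 / (2 * m)) * complex_of_real t)
                 * qexp q (z * complex_of_real (p * x)))"
proof -
  define u where "u = z * of_real p"
  define A where "A = \<i> * complex_of_real (hbar * t / (2 * m))"
  define w where "w = - z * complex_of_real (p\<^sup>2 / (2 * m)) * complex_of_real t"
  have w: "w = A * u\<^sup>2"
    unfolding w_def A_def u_def z_def using hbar by (simp add: field_simps power2_eq_square)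
  define e where "e k = w ^ k /\<^sub>R fact k" for k
  define a where "a n = (if even n then e (n div 2) else 0)" for n
  define b where "b n = (u * of_real x) ^ n / complex_of_real (qfact q n)" for n
  have "a sums exp w"
    unfolding a_def by (rule sums_even_spread) (simp add: e_def exp_converges)
  moreover have "summable (\<lambda>n. norm (a n))"
    unfolding a_def by (rule summable_norm_even_spread) (use summable_norm_exp[of w] in \<open>simp add: e_def\<close>)
  moreover have "summable (\<lambda>n. norm (b n))"
    unfolding b_def by (rule summable_norm_qexp_series[OF q])
  moreover have "suminf b = qexp q (z * complex_of_real (p * x))"
    unfolding qexp_def b_def u_def by (simp add: mult.assoc)
  ultimately have "(\<lambda>N. \<Sum>i\<le>N. a i * b (N - i)) sums (exp w * qexp q (z * complex_of_real (p * x)))"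
    using Cauchy_product_sums by (fastforce simp: sums_iff)
  moreover have "(\<Sum>i\<le>N. a i * b (N - i)) = z ^ N * complex_of_real (p ^ N / qfact q N) * Hs q hbar m N x t" for N
  proof -
    have "(\<Sum>i\<le>N. a i * b (N - i)) = (\<Sum>k\<le>N div 2. e k * b (N - 2 * k))"
      unfolding a_def by (rule Cauchy_product_even_spread)
    also have "\<dots> = u ^ N / of_real (qfact q N) * Hs q hbar m N x t"
      unfolding e_def b_def w A_def by (rule Hs_generating_coefficient[OF q])
    finally show ?thesis
      by (simp add: u_def power_mult_distrib)
  qed
  ultimately show ?thesis
    unfolding w_def by simp
qed

theorem mainTheorem13:
  fixes q hbar m :: real
  assumes "q > 1" and "hbar > 0" and "m > 0"
  shows "(\<forall>x t p :: real.
            (\<lambda>N. (\<i> / complex_of_real hbar) ^ N * complex_of_real (p ^ N / qfact q N) * Hs q hbar m N x t)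
            sums (exp (- (\<i> / complex_of_real hbar) * complex_of_real (p\<^sup>2 / (2 * m)) * complex_of_real t)
                  * qexp q ((\<i> / complex_of_real hbar) * complex_of_real (p * x))))
       \<and> (\<forall>N::nat. \<forall>x t :: real. x \<noteq> 0 \<longrightarrow>
            ((\<lambda>s. Hs q hbar m N x s) has_vector_derivative
               (\<i> * complex_of_real (hbar / (2 * m))) * Dq q (Dq q (Hs q hbar m N)) x t) (at t))"
  using Hs_generating_function[OF assms(1)] Hs_solves_q_Schroedinger[OF assms(1)] assms(2) by simp

end
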